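(* There are infinitely many golden ellipses in the unit disc $\mathbb{D}$ which are Blaschke $3$-ellipses.
   Context: The golden ratio is $\alpha=\frac{1+\sqrt5}{2}$. A golden ellipse is an ellipse for which the ratio of the length of the major axis to the length of the minor axis equals $\alpha$. For a Blaschke product of degree three of the form $B(z)=z\frac{(z-a_1)(z-a_2)}{(1-\overline{a_1}z)(1-\overline{a_2}z)}$ with $|a_1|,|a_2|<1$ and distinct zeros $0,a_1,a_2$, the associated Blaschke $3$-ellipse is the ellipse $E=\{z: |z-a_1|+|z-a_2|=|1-\overline{a_1}a_2|\}$ (with foci $a_1,a_2$); a Blaschke ellipse means an ellipse arising this way from some such $B$. *)

theory Defs
  imports "HOL-Analysis.Analysis"
begin

definition golden_ratio :: real where
  "golden_ratio = (1 + sqrt 5) / 2"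

definition ellipse_set :: "complex \<Rightarrow> complex \<Rightarrow> real \<Rightarrow> complex set" where
  "ellipse_set f1 f2 s = {z. cmod (z - f1) + cmod (z - f2) = s}"

text \<open>A (non-degenerate) ellipse with foci f1, f2 and major axis length s > |f1 - f2|
  has minor axis length sqrt (s^2 - |f1 - f2|^2). It is golden if major/minor = golden ratio.\<close>
definition golden_ellipse :: "complex set \<Rightarrow> bool" where
  "golden_ellipse E \<longleftrightarrow>
     (\<exists>f1 f2 s. s > cmod (f1 - f2) \<and> E = ellipse_set f1 f2 s \<and>
        s / sqrt (s\<^sup>2 - (cmod (f1 - f2))\<^sup>2) = golden_ratio)"

text \<open>Blaschke 3-ellipse of B(z) = z (z-a1)(z-a2)/((1 - conj a1 z)(1 - conj a2 z)),
  with |a1|,|a2| < 1 and distinct zeros 0, a1, a2.\<close>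
definition blaschke_3_ellipse :: "complex \<Rightarrow> complex \<Rightarrow> complex set" where
  "blaschke_3_ellipse a1 a2 = ellipse_set a1 a2 (cmod (1 - cnj a1 * a2))"

definition is_blaschke_ellipse :: "complex set \<Rightarrow> bool" where
  "is_blaschke_ellipse E \<longleftrightarrow>
     (\<exists>a1 a2. cmod a1 < 1 \<and> cmod a2 < 1 \<and> a1 \<noteq> 0 \<and> a2 \<noteq> 0 \<and> a1 \<noteq> a2 \<and>
        E = blaschke_3_ellipse a1 a2)"

end

theory Submission
  imports Defs
begin

text \<open>For foci \<open>\<plusminus>a\<close> the Blaschke 3-ellipse has major axis \<open>1 + |a|\<^sup>2\<close> and focal distance
  \<open>2|a|\<close>, hence minor axis \<open>1 - |a|\<^sup>2\<close>; it is golden exactly when \<open>|a|\<^sup>2 = \<surd>5 - 2\<close>, and it lies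
  in the disc since its major axis is shorter than 2. Rotating \<open>a\<close> on the circle of that radius
  gives infinitely many distinct such ellipses, because a centred ellipse determines its foci
  up to sign: the vertex \<open>(s / 2|a|) a\<close> lies on the ellipse with foci \<open>\<plusminus>b\<close> only if \<open>b\<close> is a real
  multiple of \<open>a\<close>.\<close>

lemma ellipse_set_subset_cball: "ellipse_set f1 f2 s \<subseteq> cball ((f1 + f2) / 2) (s / 2)"
proof
  fix z assume "z \<in> ellipse_set f1 f2 s"
  then have "cmod (z - f1) + cmod (z - f2) = s" by (simp add: ellipse_set_def)
  moreover have "(z - f1) + (z - f2) = 2 * (z - (f1 + f2) / 2)" by (simp add: field_simps)
  then have "cmod ((z - f1) + (z - f2)) = 2 * cmod (z - (f1 + f2) / 2)"
    by (simp only: norm_mult) simp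
  ultimately show "z \<in> cball ((f1 + f2) / 2) (s / 2)"
    using norm_triangle_ineq[of "z - f1" "z - f2"] by (simp add: dist_norm norm_minus_commute)
qed

lemma blaschke_3_ellipse_neg: "blaschke_3_ellipse a (- a) = ellipse_set a (- a) (1 + (cmod a)\<^sup>2)"
proof -
  have "complex_of_real (1 + (cmod a)\<^sup>2) = 1 - cnj a * - a"
    unfolding of_real_add complex_norm_square by (simp add: mult.commute)
  then have "cmod (1 - cnj a * - a) = 1 + (cmod a)\<^sup>2"
    by (metis abs_of_nonneg add_nonneg_nonneg norm_of_real zero_le_one zero_le_power2)
  then show ?thesis by (simp add: blaschke_3_ellipse_def)
qed

lemma is_blaschke_ellipse_neg:
  assumes "0 < cmod a" "cmod a < 1"
  shows "is_blaschke_ellipse (blaschke_3_ellipse a (- a))"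
  unfolding is_blaschke_ellipse_def using assms
  by (intro exI[of _ a] exI[of _ "- a"]) auto

lemma blaschke_3_ellipse_neg_subset_ball:
  assumes "cmod a < 1"
  shows "blaschke_3_ellipse a (- a) \<subseteq> ball 0 1"
proof -
  have "(cmod a)\<^sup>2 < 1" using assms by (simp add: power_less_one_iff)
  then have "cball 0 ((1 + (cmod a)\<^sup>2) / 2) \<subseteq> ball (0::complex) 1" by auto
  moreover have "blaschke_3_ellipse a (- a) \<subseteq> cball 0 ((1 + (cmod a)\<^sup>2) / 2)"
    using ellipse_set_subset_cball[of a "- a"] by (simp add: blaschke_3_ellipse_neg)
  ultimately show ?thesis by blast
qed

lemma golden_ratio_eq: "(1 + (sqrt 5 - 2)) / (1 - (sqrt 5 - 2)) = golden_ratio"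
proof -
  have "sqrt 5 < (3::real)" by (rule real_less_lsqrt) simp_all
  moreover have "(1 + sqrt 5) * (3 - sqrt 5) = 2 * (sqrt 5 - (1::real))"
    by (simp add: algebra_simps)
  ultimately show ?thesis by (simp add: golden_ratio_def divide_simps)
qed

lemma golden_blaschke_3_ellipse_neg:
  assumes "(cmod a)\<^sup>2 = sqrt 5 - 2"
  shows "golden_ellipse (blaschke_3_ellipse a (- a))"
proof -
  define t where "t = cmod a"
  have "sqrt 5 < (3::real)" by (rule real_less_lsqrt) simp_all
  then have "t\<^sup>2 < 1" using assms by (simp add: t_def)
  then have t: "0 \<le> t" "t < 1" by (auto simp: t_def power_less_one_iff)
  have focal: "cmod (a - - a) = 2 * t" by (simp add: t_def norm_mult flip: mult_2)
  have "0 < (1 - t)\<^sup>2" using t by simp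
  then have "2 * t < 1 + t\<^sup>2" by (simp add: power2_eq_square algebra_simps)
  moreover have "(1 + t\<^sup>2)\<^sup>2 - (2 * t)\<^sup>2 = (1 - t\<^sup>2)\<^sup>2" by algebra
  then have "sqrt ((1 + t\<^sup>2)\<^sup>2 - (2 * t)\<^sup>2) = 1 - t\<^sup>2" using \<open>t\<^sup>2 < 1\<close> by simp
  moreover have "(1 + t\<^sup>2) / (1 - t\<^sup>2) = golden_ratio"
    using assms golden_ratio_eq by (simp add: t_def)
  ultimately show ?thesis unfolding golden_ellipse_def blaschke_3_ellipse_neg
    using focal by (intro exI[of _ a] exI[of _ "- a"] exI[of _ "1 + t\<^sup>2"]) (simp add: t_def)
qed

lemma ellipse_set_neg_foci_unique:
  assumes same_norm: "cmod b = cmod a" and "a \<noteq> 0" and major: "2 * cmod a < s"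
    and eq: "ellipse_set a (- a) s = ellipse_set b (- b) s"
  shows "b = a \<or> b = - a"
proof -
  have a: "0 < cmod a" using \<open>a \<noteq> 0\<close> by simp
  then have "0 < s" using major by linarith
  define c where "c = s / (2 * cmod a)"
  define z where "z = c *\<^sub>R a"
  have "1 < c" using a major by (simp add: c_def)
  have z_norm: "cmod z = s / 2" using a \<open>0 < s\<close> by (simp add: z_def c_def)
  have "z - a = (c - 1) *\<^sub>R a" "z + a = (c + 1) *\<^sub>R a" by (simp_all add: z_def algebra_simps)
  then have "cmod (z - a) + cmod (z + a) = (c - 1) * cmod a + (c + 1) * cmod a"
    using \<open>1 < c\<close> by simp
  also have "\<dots> = s" using a by (simp add: c_def field_simps)
  finally have "cmod (z - a) + cmod (z + a) = s" .
  then have "z \<in> ellipse_set a (- a) s" by (simp add: ellipse_set_def)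
  then have "z \<in> ellipse_set b (- b) s" by (simp only: eq)
  then have on_b: "cmod (z - b) + cmod (z + b) = s" by (simp add: ellipse_set_def)
  \<comment> \<open>\<open>z\<close> attains the bound \<open>|z| \<le> s / 2\<close>, forcing equality in the triangle inequality\<close>
  have "cmod ((z - b) + (z + b)) = cmod (z - b) + cmod (z + b)"
    using on_b z_norm by (simp add: norm_mult flip: mult_2)
  then have "cmod (z - b) *\<^sub>R (z + b) = cmod (z + b) *\<^sub>R (z - b)"
    using norm_triangle_eq by blast
  then have collinear: "s *\<^sub>R b = (cmod (z + b) - cmod (z - b)) *\<^sub>R z"
    by (simp flip: on_b add: algebra_simps)
  have "b = inverse s *\<^sub>R (s *\<^sub>R b)" using \<open>0 < s\<close> by simp
  also have "\<dots> = (inverse s * (cmod (z + b) - cmod (z - b)) * c) *\<^sub>R a"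
    unfolding collinear by (simp add: z_def)
  finally obtain k :: real where k: "b = k *\<^sub>R a" by blast
  with same_norm a have "\<bar>k\<bar> = 1" by simp
  with k show ?thesis by (auto simp: abs_if split: if_splits)
qed

lemma blaschke_3_ellipse_neg_eqD:
  assumes "cmod b = cmod a" "0 < cmod a" "cmod a < 1"
    and "blaschke_3_ellipse a (- a) = blaschke_3_ellipse b (- b)"
  shows "b = a \<or> b = - a"
proof (rule ellipse_set_neg_foci_unique)
  have "0 < (1 - cmod a)\<^sup>2" using assms by simp
  then show "2 * cmod a < 1 + (cmod a)\<^sup>2" by (simp add: power2_eq_square algebra_simps)
qed (use assms in \<open>auto simp: blaschke_3_ellipse_neg\<close>)

lemma golden_blaschke_3_ellipse_neg_in_disc:
  assumes "(cmod a)\<^sup>2 = sqrt 5 - 2"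
  shows "blaschke_3_ellipse a (- a) \<subseteq> ball 0 1 \<and> golden_ellipse (blaschke_3_ellipse a (- a))
    \<and> is_blaschke_ellipse (blaschke_3_ellipse a (- a))"
proof -
  have "sqrt 5 < (3::real)" "2 < sqrt (5::real)" by (simp_all add: real_less_lsqrt real_less_rsqrt)
  then have "0 < (cmod a)\<^sup>2" "(cmod a)\<^sup>2 < 1" using assms by simp_all
  then have "0 < cmod a" "cmod a < 1" by (auto simp: power_less_one_iff)
  then show ?thesis
    using assms blaschke_3_ellipse_neg_subset_ball golden_blaschke_3_ellipse_neg
      is_blaschke_ellipse_neg by blast
qed

lemma inj_sgn_Complex_1: "inj (\<lambda>x. sgn (Complex 1 x))"
proof (rule injI)
  fix x y assume "sgn (Complex 1 x) = sgn (Complex 1 y)"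
  then have "Im (sgn (Complex 1 x)) / Re (sgn (Complex 1 x))
      = Im (sgn (Complex 1 y)) / Re (sgn (Complex 1 y))" by simp
  moreover have "1 + t\<^sup>2 \<noteq> (0::real)" for t by (smt (verit) zero_le_power2)
  ultimately show "x = y" by (simp add: cmod_def)
qed

lemma sgn_Complex_1_neq_uminus: "sgn (Complex 1 y) \<noteq> - sgn (Complex 1 x)"
  by (simp add: complex_eq_iff cmod_def add_pos_nonneg) (smt (verit) divide_pos_pos real_sqrt_gt_0_iff zero_le_power2)

theorem theorem4:
  shows "infinite {E :: complex set. E \<subseteq> ball 0 1 \<and> golden_ellipse E \<and> is_blaschke_ellipse E}"
proof -
  define r where "r = sqrt (sqrt 5 - 2)"
  have "2 < sqrt (5::real)" "sqrt 5 < (3::real)" by (simp_all add: real_less_rsqrt real_less_lsqrt)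
  then have r: "r\<^sup>2 = sqrt 5 - 2" "0 < r" "r < 1" by (simp_all add: r_def real_sqrt_less_iff)
  define f where "f x = r *\<^sub>R sgn (Complex 1 x)" for x
  have norm_f: "cmod (f x) = r" for x using r by (simp add: f_def norm_sgn complex_eq_iff)
  have "inj f" using inj_sgn_Complex_1 r by (simp add: inj_def f_def)
  moreover have "f y \<noteq> - f x" for x y
    using sgn_Complex_1_neq_uminus r by (simp add: f_def flip: scaleR_minus_right)
  ultimately have "inj (\<lambda>x. blaschke_3_ellipse (f x) (- f x))"
    using blaschke_3_ellipse_neg_eqD norm_f r by (intro injI) (metis injD)
  moreover have "range (\<lambda>x. blaschke_3_ellipse (f x) (- f x))
      \<subseteq> {E. E \<subseteq> ball 0 1 \<and> golden_ellipse E \<and> is_blaschke_ellipse E}"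
    using golden_blaschke_3_ellipse_neg_in_disc norm_f r by (simp add: image_subset_iff)
  ultimately show ?thesis using inj_on_finite infinite_UNIV_char_0[where 'a = real] by blast
qed

end
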